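(* A Tychonoff space $X$ is both a nowhere almost $P$-space and an almost $P$-space if and only if $X$ is discrete.
   Context: $C(X)$ is the ring of real-valued continuous functions on $X$; a zero set is $Z(h)=\{x: h(x)=0\}$ with $h\in C(X)$ and a cozero set is its complement. $T''(X)$ is the set of all functions $f\colon X\to\mathbb{R}$ for which there is a dense cozero set $U$ of $X$ with $f|_U$ continuous. $\chi_A$ is the characteristic function of $A$. $X$ is a nowhere almost $P$-space if $\chi_{\{p\}}\in T''(X)$ for all $p\in X$. $X$ is an almost $P$-space if every non-empty $G_\delta$-set (equivalently, for Tychonoff $X$, every non-empty zero set) has non-empty interior. *)

theory Defs
  imports "HOL-Analysis.Analysis"
begin

definition Tychonoff_space :: "'a topology \<Rightarrow> bool" where
  "Tychonoff_space X \<longleftrightarrow> completely_regular_space X \<and> t1_space X"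

definition zero_set :: "'a topology \<Rightarrow> ('a \<Rightarrow> real) \<Rightarrow> 'a set" where
  "zero_set X h = {x \<in> topspace X. h x = 0}"

definition cozero_set_in :: "'a topology \<Rightarrow> 'a set \<Rightarrow> bool" where
  "cozero_set_in X U \<longleftrightarrow>
     (\<exists>h. continuous_map X euclideanreal h \<and> U = topspace X - zero_set X h)"

definition T2prime :: "'a topology \<Rightarrow> ('a \<Rightarrow> real) set" where
  "T2prime X = {f. \<exists>U. cozero_set_in X U \<and> X closure_of U = topspace X \<and>
                         continuous_map (subtopology X U) euclideanreal f}"

definition nowhere_almost_P_space :: "'a topology \<Rightarrow> bool" where
  "nowhere_almost_P_space X \<longleftrightarrow> (\<forall>p \<in> topspace X. indicator {p} \<in> T2prime X)"

definition almost_P_space :: "'a topology \<Rightarrow> bool" where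
  "almost_P_space X \<longleftrightarrow>
     (\<forall>G. gdelta_in X G \<and> G \<noteq> {} \<longrightarrow> X interior_of G \<noteq> {})"

end

theory Submission
  imports Defs
begin

text \<open>Zero sets are \<open>G\<^sub>\<delta>\<close>, so in an almost \<open>P\<close>-space a nonempty zero set has interior and
  cannot be disjoint from a dense set; hence the only dense cozero set is the whole space and
  \<open>T''(X) = C(X)\<close>. A nowhere almost \<open>P\<close>-space that is also almost \<open>P\<close> therefore has every
  indicator of a singleton continuous, i.e. every point isolated.\<close>

lemma gdelta_in_continuous_map_preimage:
  assumes f: "continuous_map X Y f" and S: "gdelta_in Y S"
  shows "gdelta_in X {x \<in> topspace X. f x \<in> S}"
proof -
  obtain C where C: "\<And>n. openin Y (C n)" "\<And>n. C (Suc n) \<subseteq> C n" and S_eq: "\<Inter> (range C) = S"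
    using S gdelta_in_descending by metis
  let ?D = "\<lambda>n. {x \<in> topspace X. f x \<in> C n}"
  have "openin X (?D n)" for n
    using C(1) f openin_continuous_map_preimage by blast
  moreover have "?D (Suc n) \<subseteq> ?D n" for n
    using C(2) by blast
  moreover have "\<Inter> (range ?D) = {x \<in> topspace X. f x \<in> S}"
    unfolding S_eq [symmetric] by blast
  ultimately show ?thesis
    unfolding gdelta_in_descending by (intro exI [of _ ?D]) blast
qed

lemma gdelta_in_zero_set:
  assumes "continuous_map X euclideanreal h"
  shows "gdelta_in X (zero_set X h)"
proof -
  have "gdelta_in euclideanreal {0}"
    by (simp add: closed_imp_gdelta_in metrizable_space_euclidean)
  from gdelta_in_continuous_map_preimage [OF assms this] show ?thesis
    by (simp add: zero_set_def)
qed

lemma almost_P_space_dense_cozero_set_eq_topspace: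
  assumes X: "almost_P_space X" and U: "cozero_set_in X U"
    and dense: "X closure_of U = topspace X"
  shows "U = topspace X"
proof -
  obtain h where h: "continuous_map X euclideanreal h" and U_eq: "U = topspace X - zero_set X h"
    using U by (auto simp: cozero_set_in_def)
  have "topspace X - U = zero_set X h"
    using U_eq by (auto simp: zero_set_def)
  then have "X interior_of zero_set X h = {}"
    using dense by (simp add: closure_of_eq_topspace)
  then have "zero_set X h = {}"
    using X gdelta_in_zero_set [OF h] by (auto simp: almost_P_space_def)
  then show ?thesis
    by (simp add: U_eq)
qed

lemma topspace_cozero_set_in: "cozero_set_in X (topspace X)"
  unfolding cozero_set_in_def by (rule exI [of _ "\<lambda>_. 1"]) (simp add: zero_set_def)

lemma almost_P_space_T2prime_eq:
  assumes "almost_P_space X"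
  shows "T2prime X = {f. continuous_map X euclideanreal f}"
  using almost_P_space_dense_cozero_set_eq_topspace [OF assms] topspace_cozero_set_in
  by (fastforce simp: T2prime_def)

lemma continuous_map_indicator_imp_openin:
  assumes "continuous_map X euclideanreal (indicator S)"
  shows "openin X (topspace X \<inter> S)"
proof -
  have "openin X {x \<in> topspace X. indicator S x \<in> {(0::real)<..}}"
    using assms by (rule openin_continuous_map_preimage) simp
  moreover have "{x \<in> topspace X. indicator S x \<in> {(0::real)<..}} = topspace X \<inter> S"
    by (auto simp: indicator_def)
  ultimately show ?thesis
    by simp
qed

lemma almost_P_space_discrete_topology: "almost_P_space (discrete_topology U)"
  unfolding almost_P_space_def
proof (intro allI impI)
  fix G assume "gdelta_in (discrete_topology U) G \<and> G \<noteq> {}"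
  then show "discrete_topology U interior_of G \<noteq> {}"
    using gdelta_in_subset by (fastforce simp: interior_of_openin)
qed

theorem corollary4p1:
  fixes X :: "'a topology"
  assumes "Tychonoff_space X"
  shows "(nowhere_almost_P_space X \<and> almost_P_space X) \<longleftrightarrow>
         X = discrete_topology (topspace X)"
proof
  assume X: "nowhere_almost_P_space X \<and> almost_P_space X"
  have "openin X {p}" if "p \<in> topspace X" for p
    using X that continuous_map_indicator_imp_openin [of X "{p}"]
    by (auto simp: nowhere_almost_P_space_def almost_P_space_T2prime_eq)
  then show "X = discrete_topology (topspace X)"
    by (metis discrete_topology_unique)
next
  assume X: "X = discrete_topology (topspace X)"
  then have "almost_P_space X"
    by (metis almost_P_space_discrete_topology)
  moreover have "continuous_map X euclideanreal f" for f
    using continuous_map_from_discrete_topology [of "topspace X" euclideanreal f] by (simp flip: X)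
  ultimately show "nowhere_almost_P_space X \<and> almost_P_space X"
    by (simp add: nowhere_almost_P_space_def almost_P_space_T2prime_eq)
qed

end
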